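(* Let $f:\mathbb{R}^n\times\mathbb{R}\to\mathbb{R}^n$ be $C^1$, let $\lambda_-<\lambda_+$, let $\Lambda$ be a parameter shift from $\lambda_-$ to $\lambda_+$, and let $r>0$. Let $\Phi$ be the solution cocycle of $\dot x=f(x,\Lambda(rt))$ and $\phi_-$ the flow of the past limit system $\dot x=f(x,\lambda_-)$. Suppose that $A_-$ is an asymptotically stable attractor for $\phi_-$. Then there is a local pullback attractor $\mathcal{A}$ of $\dot x=f(x,\Lambda(rt))$ whose upper backward limit $A_{-\infty}$ is contained in $A_-$.
   Context: A parameter shift from $\lambda_-$ to $\lambda_+$ is a smooth $\Lambda:\mathbb{R}\to(\lambda_-,\lambda_+)$ with $\lim_{\tau\to\pm\infty}\Lambda(\tau)=\lambda_\pm$ and $\lim_{\tau\to\pm\infty}\Lambda'(\tau)=0$. Solutions are assumed to exist for all time; $\Phi(t,s,x_0)$ is the value at time $t$ of the solution with $x(s)=x_0$. For nonempty compact $X,Y\subset\mathbb{R}^n$, $d(X,Y)=\sup_{x\in X}\inf_{y\in Y}\|x-y\|$, and $\mathcal{N}_\eta(M)=\{x: d(x,M)<\eta\}$. A compact $\phi_-$-invariant set $M$ is asymptotically stable if (i) for every $\epsilon>0$ there is $\delta>0$ with $d(\phi_-(t,y),M)<\epsilon$ for all $t>0$ and $y\in\mathcal{N}_\delta(M)$, and (ii) there is $\eta>0$ with $\lim_{t\to\infty}d(\phi_-(t,y),M)=0$ for all $y\in\mathcal{N}_\eta(M)$. A nonautonomous set is a family $\mathcal{A}=\{A_t\}_{t\in\mathbb{R}}$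 of nonempty subsets of $\mathbb{R}^n$; it is invariant if $\Phi(t,s,A_s)=A_t$ for all $t,s$, compact if each $A_t$ is compact; its upper backward limit is $A_{-\infty}=\bigcap_{\tau>0}\overline{\bigcup_{t\le-\tau}A_t}$. A (local) pullback attractor is a compact invariant nonautonomous set $\mathcal{A}$ for which there exists a bounded open set $U$ containing $A_{-\infty}$ such that $\lim_{s\to-\infty}d(\Phi(t,s,U),A_t)=0$ for all $t\in\mathbb{R}$. *)

theory Defs
  imports "HOL-Analysis.Analysis"
begin

definition C1_fun2 :: "('a::euclidean_space \<Rightarrow> real \<Rightarrow> 'a) \<Rightarrow> bool" where
  "C1_fun2 f \<longleftrightarrow> (\<exists>f' :: 'a \<times> real \<Rightarrow> ('a \<times> real) \<Rightarrow>\<^sub>L 'a.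
      (\<forall>p. ((\<lambda>q. f (fst q) (snd q)) has_derivative blinfun_apply (f' p)) (at p))
      \<and> continuous_on UNIV f')"

definition smooth_real :: "(real \<Rightarrow> real) \<Rightarrow> bool" where
  "smooth_real g \<longleftrightarrow> (\<forall>k::nat. \<forall>t. ((deriv ^^ k) g) differentiable (at t))"

definition parameter_shift :: "(real \<Rightarrow> real) \<Rightarrow> real \<Rightarrow> real \<Rightarrow> bool" where
  "parameter_shift \<Lambda> lm lp \<longleftrightarrow>
     smooth_real \<Lambda> \<and> (\<forall>t. lm < \<Lambda> t \<and> \<Lambda> t < lp) \<and>
     (\<Lambda> \<longlongrightarrow> lm) at_bot \<and> (\<Lambda> \<longlongrightarrow> lp) at_top \<and>
     (deriv \<Lambda> \<longlongrightarrow> 0) at_bot \<and> (deriv \<Lambda> \<longlongrightarrow> 0) at_top"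

text \<open>Phi t s x0 = value at time t of the solution with x(s) = x0 (global existence assumed).\<close>
definition is_solution_cocycle :: "('a::euclidean_space \<Rightarrow> real \<Rightarrow> 'a) \<Rightarrow> (real \<Rightarrow> real) \<Rightarrow> real
     \<Rightarrow> (real \<Rightarrow> real \<Rightarrow> 'a \<Rightarrow> 'a) \<Rightarrow> bool" where
  "is_solution_cocycle f \<Lambda> r \<Phi> \<longleftrightarrow>
     (\<forall>s x0. \<Phi> s s x0 = x0 \<and>
        (\<forall>t. ((\<lambda>\<tau>. \<Phi> \<tau> s x0) has_vector_derivative f (\<Phi> t s x0) (\<Lambda> (r * t))) (at t)))"

definition is_autonomous_flow :: "('a::euclidean_space \<Rightarrow> real \<Rightarrow> 'a) \<Rightarrow> real
     \<Rightarrow> (real \<Rightarrow> 'a \<Rightarrow> 'a) \<Rightarrow> bool" where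
  "is_autonomous_flow f lam \<phi> \<longleftrightarrow>
     (\<forall>x0. \<phi> 0 x0 = x0 \<and>
        (\<forall>t. ((\<lambda>\<tau>. \<phi> \<tau> x0) has_vector_derivative f (\<phi> t x0) lam) (at t)))"

definition setdist_d :: "'a::metric_space set \<Rightarrow> 'a set \<Rightarrow> real" where
  "setdist_d X Y = (SUP x\<in>X. infdist x Y)"

definition nbhd :: "real \<Rightarrow> 'a::metric_space set \<Rightarrow> 'a set" where
  "nbhd \<eta> M = {x. infdist x M < \<eta>}"

definition asymptotically_stable :: "(real \<Rightarrow> 'a::metric_space \<Rightarrow> 'a) \<Rightarrow> 'a set \<Rightarrow> bool" where
  "asymptotically_stable \<phi> M \<longleftrightarrow>
     M \<noteq> {} \<and> compact M \<and> (\<forall>t. \<phi> t ` M = M) \<and>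
     (\<forall>\<epsilon>>0. \<exists>\<delta>>0. \<forall>t>0. \<forall>y\<in>nbhd \<delta> M. setdist_d {\<phi> t y} M < \<epsilon>) \<and>
     (\<exists>\<eta>>0. \<forall>y\<in>nbhd \<eta> M. ((\<lambda>t. setdist_d {\<phi> t y} M) \<longlongrightarrow> 0) at_top)"

definition upper_backward_limit :: "(real \<Rightarrow> 'a::topological_space set) \<Rightarrow> 'a set" where
  "upper_backward_limit A = (\<Inter>\<tau>\<in>{0<..}. closure (\<Union>t\<in>{..-\<tau>}. A t))"

definition local_pullback_attractor :: "(real \<Rightarrow> real \<Rightarrow> 'a::metric_space \<Rightarrow> 'a) \<Rightarrow> (real \<Rightarrow> 'a set) \<Rightarrow> bool" where
  "local_pullback_attractor \<Phi> A \<longleftrightarrow>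
     (\<forall>t. A t \<noteq> {} \<and> compact (A t)) \<and>
     (\<forall>t s. \<Phi> t s ` A s = A t) \<and>
     (\<exists>U. bounded U \<and> open U \<and> upper_backward_limit A \<subseteq> U \<and>
        (\<forall>t. ((\<lambda>s. setdist_d (\<Phi> t s ` U) (A t)) \<longlongrightarrow> 0) at_bot))"

end

theory Submission
  imports Defs
begin

(* Near A_-, the closed neighbourhood K = {x. d(x, A_-) <= rho} is uniformly attracted by the
   past limit flow (stability plus compactness). In the far past the parameter is close to
   lambda_-, so Gronwall estimates make the nonautonomous orbits shadow the past limit flow on
   bounded time windows. Hence for some period T the map Phi(s + T, s) sends K into itself for
   all early s, and the orbits from K reach a bounded set at a fixed early time t0. The pullback
   omega-limit set of K at time t0, transported by Phi(t, t0), is then a compact invariant family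
   that pullback-attracts the open rho-neighbourhood of A_-; shadowing over arbitrarily long
   windows shows that its upper backward limit lies in A_-. *)

section \<open>Gronwall estimates\<close>

lemma two_inner_le_of_norm_le:
  fixes g G :: "'a::real_inner"
  assumes G: "norm G \<le> L * norm g + e" and "L \<ge> 0" "e \<ge> 0"
  shows "2 * inner g G \<le> (2*L+1) * (norm g ^ 2 + e ^ 2)"
proof -
  have "inner g G \<le> norm g * (L * norm g + e)"
    using norm_cauchy_schwarz[of g G] mult_left_mono[OF G norm_ge_zero[of g]] by linarith
  moreover have "2 * (norm g * e) \<le> norm g ^ 2 + e ^ 2"
    using zero_le_power2[of "norm g - e"] by (simp add: power2_diff)
  moreover have "0 \<le> 2 * L * e ^ 2" using assms(2) by simp
  ultimately show ?thesis by (simp add: algebra_simps power2_eq_square)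
qed

lemma gronwall_norm_sq:
  fixes g G :: "real \<Rightarrow> 'a::real_inner"
  assumes "a \<le> b" "L \<ge> 0" "e \<ge> 0"
    and der: "\<And>\<sigma>. (g has_vector_derivative G \<sigma>) (at \<sigma>)"
    and bnd: "\<And>\<sigma>. a < \<sigma> \<Longrightarrow> \<sigma> < b \<Longrightarrow> norm (G \<sigma>) \<le> L * norm (g \<sigma>) + e"
  shows "norm (g b)^2 \<le> exp ((2*L+1)*(b-a)) * (norm (g a)^2 + e^2)"
proof -
  define k where "k = 2*L+1"
  define w where "w \<sigma> = exp (-(k*\<sigma>)) * (inner (g \<sigma>) (g \<sigma>) + e^2)" for \<sigma>
  have dw: "(w has_real_derivative
      exp (-(k*\<sigma>)) * (2 * inner (g \<sigma>) (G \<sigma>) - k * (inner (g \<sigma>) (g \<sigma>) + e^2))) (at \<sigma>)" for \<sigma>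
  proof -
    have gd: "(g has_derivative (\<lambda>h. h *\<^sub>R G \<sigma>)) (at \<sigma>)"
      using der[of \<sigma>] by (simp add: has_vector_derivative_def)
    have "((\<lambda>s. inner (g s) (g s)) has_real_derivative 2 * inner (g \<sigma>) (G \<sigma>)) (at \<sigma>)"
      unfolding has_field_derivative_def
      by (rule has_derivative_eq_rhs[OF has_derivative_inner[OF gd gd]])
        (auto simp: inner_commute algebra_simps)
    then show ?thesis unfolding w_def
      by (auto intro!: derivative_eq_intros simp: algebra_simps)
  qed
  have "w b \<le> w a"
  proof (rule DERIV_nonpos_imp_decreasing_open[OF \<open>a \<le> b\<close>])
    fix x assume "a < x" "x < b"
    then have "2 * inner (g x) (G x) \<le> k * (inner (g x) (g x) + e^2)"
      using two_inner_le_of_norm_le[OF bnd assms(2,3)] by (simp add: k_def power2_norm_eq_inner)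
    then show "\<exists>y. (w has_real_derivative y) (at x) \<and> y \<le> 0"
      using dw by (meson diff_le_0_iff_le exp_ge_zero mult_nonneg_nonpos)
  next
    show "continuous_on {a..b} w"
      using dw by (meson DERIV_isCont continuous_at_imp_continuous_on)
  qed
  then have "exp (k*b) * (exp (-(k*b)) * (norm (g b)^2 + e^2))
      \<le> exp (k*b) * (exp (-(k*a)) * (norm (g a)^2 + e^2))"
    unfolding w_def by (simp add: power2_norm_eq_inner)
  then have "norm (g b)^2 + e^2 \<le> exp (k*(b-a)) * (norm (g a)^2 + e^2)"
    by (simp add: mult.assoc[symmetric] exp_add[symmetric] right_diff_distrib)
  then show ?thesis unfolding k_def by (smt (verit) zero_le_power2)
qed

lemma gronwall_norm_sq_while_small:
  fixes g G :: "real \<Rightarrow> 'a::real_inner"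
  assumes "L \<ge> 0" "e \<ge> 0"
    and der: "\<And>\<sigma>. (g has_vector_derivative G \<sigma>) (at \<sigma>)"
    and bnd: "\<And>\<sigma>. a \<le> \<sigma> \<Longrightarrow> \<sigma> \<le> b \<Longrightarrow> norm (g \<sigma>) \<le> 1 \<Longrightarrow>
        norm (G \<sigma>) \<le> L * norm (g \<sigma>) + e"
    and small: "exp ((2*L+1)*(b-a)) * (norm (g a)^2 + e^2) < 1"
    and \<tau>: "a \<le> \<tau>" "\<tau> \<le> b"
  shows "norm (g \<tau>)^2 \<le> exp ((2*L+1)*(\<tau>-a)) * (norm (g a)^2 + e^2)"
proof -
  have below: "exp ((2*L+1)*(t-a)) * (norm (g a)^2 + e^2) < 1" if "t \<le> b" for t
    using that \<open>L \<ge> 0\<close> by (intro order.strict_trans1[OF _ small] mult_right_mono) auto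
  \<comment> \<open>at the first time the norm of g reaches 1, Gronwall (valid up to that time) gives norm < 1\<close>
  have inside: "norm (g t) < 1" if "a \<le> t" "t \<le> b" for t
  proof (rule ccontr)
    assume "\<not> norm (g t) < 1"
    define S where "S = {a..b} \<inter> {t. 1 \<le> norm (g t)}"
    have "continuous_on UNIV g"
      using der by (meson continuous_at_imp_continuous_on has_vector_derivative_continuous)
    then have "closed S"
      unfolding S_def by (intro closed_Int closed_Collect_le) (auto intro!: continuous_intros)
    moreover have "S \<noteq> {}" "bdd_below S"
      using that \<open>\<not> norm (g t) < 1\<close> unfolding S_def by (auto intro: bdd_belowI[of _ a])
    ultimately have t0: "Inf S \<in> S" by (rule closed_contains_Inf[rotated 2])
    have "norm (g (Inf S))^2 \<le> exp ((2*L+1)*(Inf S-a)) * (norm (g a)^2 + e^2)"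
    proof (rule gronwall_norm_sq[OF _ assms(1,2) der])
      fix \<sigma> assume "a < \<sigma>" "\<sigma> < Inf S"
      then have "\<sigma> \<notin> S" using cInf_lower[OF _ \<open>bdd_below S\<close>, of \<sigma>] by force
      then show "norm (G \<sigma>) \<le> L * norm (g \<sigma>) + e"
        using bnd[of \<sigma>] \<open>a < \<sigma>\<close> \<open>\<sigma> < Inf S\<close> t0 unfolding S_def by auto
    qed (use t0 in \<open>auto simp: S_def\<close>)
    also have "\<dots> < 1" using below t0 unfolding S_def by auto
    finally have "norm (g (Inf S)) < 1" by (simp add: abs_square_less_1)
    then show False using t0 unfolding S_def by auto
  qed
  show ?thesis
    by (rule gronwall_norm_sq[OF \<tau>(1) assms(1,2) der])
      (use bnd inside \<tau> in \<open>auto simp: less_imp_le\<close>)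
qed

lemma gronwall_norm_sq_while_small_two_sided:
  fixes g G :: "real \<Rightarrow> 'a::real_inner"
  assumes "L \<ge> 0" "e \<ge> 0"
    and der: "\<And>\<sigma>. (g has_vector_derivative G \<sigma>) (at \<sigma>)"
    and bnd: "\<And>\<sigma>. \<sigma> \<in> {min a b..max a b} \<Longrightarrow> norm (g \<sigma>) \<le> 1 \<Longrightarrow>
        norm (G \<sigma>) \<le> L * norm (g \<sigma>) + e"
    and small: "exp ((2*L+1)*\<bar>b-a\<bar>) * (norm (g a)^2 + e^2) < 1"
    and \<tau>: "\<tau> \<in> {min a b..max a b}"
  shows "norm (g \<tau>)^2 \<le> exp ((2*L+1)*\<bar>\<tau>-a\<bar>) * (norm (g a)^2 + e^2)"
proof (cases "a \<le> b")
  case True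
  have "norm (g \<tau>)^2 \<le> exp ((2*L+1)*(\<tau>-a)) * (norm (g a)^2 + e^2)"
    by (rule gronwall_norm_sq_while_small[OF assms(1,2) der]) (use bnd small \<tau> True in auto)
  then show ?thesis using \<tau> True by simp
next
  case False
  \<comment> \<open>run time backwards\<close>
  have "((g \<circ> uminus) has_vector_derivative - G (- \<sigma>)) (at \<sigma>)" for \<sigma>
    using vector_diff_chain_at[OF has_vector_derivative_minus[OF has_vector_derivative_id] der]
    by simp
  then have "norm ((g \<circ> uminus) (-\<tau>))^2
      \<le> exp ((2*L+1)*(-\<tau>-(-a))) * (norm ((g \<circ> uminus) (-a))^2 + e^2)"
    by (rule gronwall_norm_sq_while_small[where a="-a" and b="-b", OF assms(1,2)])
      (use bnd small \<tau> False in auto)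
  then show ?thesis using \<tau> False by simp
qed

lemma small_square_below:
  assumes "c > 0" "\<epsilon> > 0"
  obtains \<delta> :: real where "\<delta> > 0" "c * \<delta>^2 < min 1 (\<epsilon>^2)"
proof
  define m where "m = min 1 \<epsilon>"
  have "m > 0" "m^2 \<le> 1" "m^2 \<le> \<epsilon>^2"
    using assms by (auto simp: m_def power_le_one min_def power_mono)
  show "m / sqrt (2*c) > 0" using \<open>m > 0\<close> assms by simp
  have eq: "c * (m / sqrt (2*c))^2 = m^2 / 2" using assms by (simp add: power_divide)
  have "m^2 > 0" using \<open>m > 0\<close> by simp
  then show "c * (m / sqrt (2*c))^2 < min 1 (\<epsilon>^2)"
    unfolding eq min_less_iff_conj using \<open>m^2 \<le> 1\<close> \<open>m^2 \<le> \<epsilon>^2\<close> by linarith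
qed

lemma continuous_bounded_on_interval:
  fixes x :: "real \<Rightarrow> 'a::real_normed_vector"
  assumes "continuous_on UNIV x"
  obtains R where "\<And>\<sigma>. \<sigma> \<in> {a..b} \<Longrightarrow> norm (x \<sigma>) \<le> R"
  using compact_continuous_image[OF continuous_on_subset[OF assms subset_UNIV] compact_Icc]
  by (metis compact_imp_bounded bounded_iff image_eqI)

lemma compact_local_bound_uniform:
  fixes K :: "'a::metric_space set"
  assumes "compact K"
    and local: "\<And>y0. y0 \<in> K \<Longrightarrow> \<exists>\<delta>>0. \<exists>R::real. \<forall>y. dist y y0 < \<delta> \<longrightarrow> P R y"
    and mono: "\<And>R R' y. P R y \<Longrightarrow> R \<le> R' \<Longrightarrow> P R' y"
  shows "\<exists>R. \<forall>y\<in>K. P R y"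
proof -
  obtain \<delta> R where dR: "\<And>y0. y0 \<in> K \<Longrightarrow> \<delta> y0 > 0 \<and> (\<forall>y. dist y y0 < \<delta> y0 \<longrightarrow> P (R y0) y)"
    using local by metis
  obtain C where C: "C \<subseteq> K" "finite C" "K \<subseteq> (\<Union>c\<in>C. ball c (\<delta> c))"
    by (rule compactE_image[OF \<open>compact K\<close>, of K "\<lambda>c. ball c (\<delta> c)"]) (use dR in auto)
  have "P (Max (insert 0 (R ` C))) y" if "y \<in> K" for y
  proof -
    obtain c where c: "c \<in> C" "y \<in> ball c (\<delta> c)" using C \<open>y \<in> K\<close> by auto
    then have "P (R c) y" using dR[of c] C(1) by (auto simp: dist_commute)
    then show ?thesis using C(2) c(1) by (elim mono) auto
  qed
  then show ?thesis by blast
qed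

lemma compact_nest_near_Inter:
  fixes F :: "'i::linorder \<Rightarrow> 'a::heine_borel set"
  assumes "\<And>i. compact (F i)" and "\<And>i. F i \<noteq> {}" and mono: "\<And>i j. i \<le> j \<Longrightarrow> F j \<subseteq> F i"
    and "\<epsilon> > 0"
  obtains i where "\<And>x. x \<in> F i \<Longrightarrow> infdist x (\<Inter>(range F)) < \<epsilon>"
proof -
  define E where "E i = F i \<inter> {x. \<epsilon> \<le> infdist x (\<Inter>(range F))}" for i
  have "\<Inter>(range E) = {}" using \<open>\<epsilon> > 0\<close> unfolding E_def by auto
  moreover have "compact (E i)" for i
    unfolding E_def by (intro compact_Int_closed assms closed_Collect_le continuous_intros)
  moreover have "E j \<subseteq> E i" if "i \<le> j" for i j unfolding E_def using mono[OF that] by auto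
  ultimately obtain i where "E i = {}" using compact_nest[of E] by blast
  show ?thesis
  proof (rule that)
    fix x assume "x \<in> F i"
    with \<open>E i = {}\<close> have "\<not> \<epsilon> \<le> infdist x (\<Inter>(range F))" unfolding E_def by blast
    then show "infdist x (\<Inter>(range F)) < \<epsilon>" by simp
  qed
qed

lemma abs_setdist_d_le:
  assumes "X \<noteq> {}" "\<And>x. x \<in> X \<Longrightarrow> infdist x Y \<le> e"
  shows "\<bar>setdist_d X Y\<bar> \<le> e"
proof -
  obtain x where "x \<in> X" using assms(1) by blast
  have "bdd_above ((\<lambda>x. infdist x Y) ` X)" using assms(2) by (rule bdd_aboveI2)
  then have "infdist x Y \<le> setdist_d X Y" unfolding setdist_d_def by (rule cSUP_upper[OF \<open>x \<in> X\<close>])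
  moreover have "setdist_d X Y \<le> e" unfolding setdist_d_def by (rule cSUP_least) (use assms in auto)
  ultimately show ?thesis using infdist_nonneg[of x Y] by linarith
qed

lemma setdist_d_singleton [simp]: "setdist_d {z} M = infdist z M"
  unfolding setdist_d_def by simp

section \<open>Solutions of differential equations with a parameter path\<close>

definition ode_solution ::
    "('a::real_normed_vector \<Rightarrow> real \<Rightarrow> 'a) \<Rightarrow> (real \<Rightarrow> real) \<Rightarrow> (real \<Rightarrow> 'a) \<Rightarrow> bool" where "ode_solution f p x \<longleftrightarrow> (\<forall>\<sigma>. (x has_vector_derivative f (x \<sigma>) (p \<sigma>)) (at \<sigma>))"

lemma ode_solution_continuous: "ode_solution f p x \<Longrightarrow> continuous_on UNIV x"
  unfolding ode_solution_def
  by (meson continuous_at_imp_continuous_on has_vector_derivative_continuous)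

lemma ode_solution_shift:
  assumes "ode_solution f p x"
  shows "ode_solution f (\<lambda>\<sigma>. p (\<sigma> + h)) (\<lambda>\<sigma>. x (\<sigma> + h))"
  unfolding ode_solution_def
proof
  fix \<sigma>
  have "((\<lambda>\<sigma>. \<sigma> + h) has_vector_derivative 1) (at \<sigma>)"
    by (auto intro!: derivative_eq_intros)
  from vector_diff_chain_at[OF this, of x] assms
  show "((\<lambda>\<sigma>. x (\<sigma> + h)) has_vector_derivative f (x (\<sigma> + h)) (p (\<sigma> + h))) (at \<sigma>)"
    unfolding ode_solution_def by (simp add: o_def)
qed

lemma C1_fun2_lipschitz_on_bounded:
  fixes f :: "'a::euclidean_space \<Rightarrow> real \<Rightarrow> 'a"
  assumes "C1_fun2 f"
  obtains B where "B > 0"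
    "\<And>z w l m. norm z \<le> R \<Longrightarrow> norm w \<le> R \<Longrightarrow> l \<in> {lm..lp} \<Longrightarrow> m \<in> {lm..lp} \<Longrightarrow>
       norm (f z l - f w m) \<le> B * (norm (z - w) + \<bar>l - m\<bar>)"
proof -
  obtain f' :: "'a \<times> real \<Rightarrow> ('a \<times> real) \<Rightarrow>\<^sub>L 'a" where
    fd: "\<And>p. ((\<lambda>q. f (fst q) (snd q)) has_derivative blinfun_apply (f' p)) (at p)"
    and fc: "continuous_on UNIV f'"
    using assms unfolding C1_fun2_def by blast
  define S where "S = cball (0::'a) R \<times> {lm..lp}"
  have "compact S" "convex S" unfolding S_def by (auto intro: compact_Times convex_Times)
  then have "compact (f' ` S)" by (intro compact_continuous_image continuous_on_subset[OF fc]) auto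
  then obtain B0 where B0: "\<And>p. p \<in> S \<Longrightarrow> norm (f' p) \<le> B0"
    using compact_imp_bounded bounded_iff by (metis image_eqI)
  define B where "B = max B0 1"
  have "norm (f z l - f w m) \<le> B * (norm (z - w) + \<bar>l - m\<bar>)"
    if "norm z \<le> R" "norm w \<le> R" "l \<in> {lm..lp}" "m \<in> {lm..lp}" for z w l m
  proof -
    have "(z, l) \<in> S" "(w, m) \<in> S" using that unfolding S_def by auto
    then have "norm ((\<lambda>q. f (fst q) (snd q)) (z, l) - (\<lambda>q. f (fst q) (snd q)) (w, m))
        \<le> B * norm ((z, l) - (w, m))"
    proof (rule differentiable_bound[OF \<open>convex S\<close>, rotated 2])
      fix p assume "p \<in> S"
      show "((\<lambda>q. f (fst q) (snd q)) has_derivative blinfun_apply (f' p)) (at p within S)"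
        using fd has_derivative_at_withinI by blast
      show "onorm (blinfun_apply (f' p)) \<le> B"
        using B0[OF \<open>p \<in> S\<close>] by (simp add: B_def norm_blinfun.rep_eq[symmetric])
    qed
    then have "norm (f z l - f w m) \<le> B * norm ((z, l) - (w, m))" by simp
    also have "\<dots> \<le> B * (norm (z - w) + \<bar>l - m\<bar>)"
      using norm_Pair_le[of "z - w" "l - m"] by (intro mult_left_mono) (auto simp: B_def)
    finally show ?thesis .
  qed
  then show ?thesis using that[of B] by (simp add: B_def)
qed

definition comparison_constant ::
    "('a::real_normed_vector \<Rightarrow> real \<Rightarrow> 'a) \<Rightarrow> real \<Rightarrow> real \<Rightarrow> real \<Rightarrow> real \<Rightarrow> bool" where
  "comparison_constant f lm lp R B \<longleftrightarrow> B > 0 \<and>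
     (\<forall>x y p q d a b. ode_solution f p x \<longrightarrow> ode_solution f q y \<longrightarrow>
        range p \<subseteq> {lm..lp} \<longrightarrow> range q \<subseteq> {lm..lp} \<longrightarrow>
        (\<forall>\<sigma>\<in>{min a b..max a b}. norm (x \<sigma>) \<le> R \<and> \<bar>p \<sigma> - q \<sigma>\<bar> \<le> d) \<longrightarrow>
        exp ((2*B+1)*\<bar>b-a\<bar>) * (norm (x a - y a)^2 + (B*d)^2) < 1 \<longrightarrow>
        (\<forall>\<tau>\<in>{min a b..max a b}.
           norm (x \<tau> - y \<tau>)^2 \<le> exp ((2*B+1)*\<bar>\<tau>-a\<bar>) * (norm (x a - y a)^2 + (B*d)^2)))"

lemma comparison_constant_pos: "comparison_constant f lm lp R B \<Longrightarrow> B > 0"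
  unfolding comparison_constant_def by blast

lemma comparison_constantD:
  assumes "comparison_constant f lm lp R B" "ode_solution f p x" "ode_solution f q y"
    "range p \<subseteq> {lm..lp}" "range q \<subseteq> {lm..lp}"
    "\<And>\<sigma>. \<sigma> \<in> {min a b..max a b} \<Longrightarrow> norm (x \<sigma>) \<le> R \<and> \<bar>p \<sigma> - q \<sigma>\<bar> \<le> d"
    "exp ((2*B+1)*\<bar>b-a\<bar>) * (norm (x a - y a)^2 + (B*d)^2) < 1" "\<tau> \<in> {min a b..max a b}"
  shows "norm (x \<tau> - y \<tau>)^2 \<le> exp ((2*B+1)*\<bar>\<tau>-a\<bar>) * (norm (x a - y a)^2 + (B*d)^2)"
  using assms unfolding comparison_constant_def by blast

text \<open>The smallness hypothesis keeps x - y in the unit ball, so y stays in the ball of radius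
  R + 1 on which f is Lipschitz.\<close>
lemma comparison_constant_exists:
  fixes f :: "'a::euclidean_space \<Rightarrow> real \<Rightarrow> 'a"
  assumes "C1_fun2 f"
  obtains B where "comparison_constant f lm lp R B"
proof -
  obtain B where B: "B > 0" and lip: "\<And>z w l m. norm z \<le> R+1 \<Longrightarrow> norm w \<le> R+1 \<Longrightarrow>
      l \<in> {lm..lp} \<Longrightarrow> m \<in> {lm..lp} \<Longrightarrow> norm (f z l - f w m) \<le> B * (norm (z - w) + \<bar>l - m\<bar>)"
    using C1_fun2_lipschitz_on_bounded[OF assms] by blast
  have "comparison_constant f lm lp R B"
    unfolding comparison_constant_def
  proof (intro conjI allI impI ballI)
    show "B > 0" by fact
    fix x y p q d a b \<tau>
    assume sx: "ode_solution f p x" and sy: "ode_solution f q y"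
      and pq: "range p \<subseteq> {lm..lp}" "range q \<subseteq> {lm..lp}"
      and near: "\<forall>\<sigma>\<in>{min a b..max a b}. norm (x \<sigma>) \<le> R \<and> \<bar>p \<sigma> - q \<sigma>\<bar> \<le> d"
      and small: "exp ((2*B+1)*\<bar>b-a\<bar>) * (norm (x a - y a)^2 + (B*d)^2) < 1"
      and \<tau>: "\<tau> \<in> {min a b..max a b}"
    show "norm (x \<tau> - y \<tau>)^2 \<le> exp ((2*B+1)*\<bar>\<tau>-a\<bar>) * (norm (x a - y a)^2 + (B*d)^2)"
    proof (rule gronwall_norm_sq_while_small_two_sided[where g="\<lambda>\<sigma>. x \<sigma> - y \<sigma>"
          and G="\<lambda>\<sigma>. f (x \<sigma>) (p \<sigma>) - f (y \<sigma>) (q \<sigma>)", OF _ _ _ _ small \<tau>])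
      have "0 \<le> d" using near by force
      then show "0 \<le> B" "0 \<le> B * d" using B by auto
      show "((\<lambda>\<sigma>. x \<sigma> - y \<sigma>) has_vector_derivative f (x \<sigma>) (p \<sigma>) - f (y \<sigma>) (q \<sigma>)) (at \<sigma>)" for \<sigma>
        using sx sy unfolding ode_solution_def by (intro derivative_intros) auto
      fix \<sigma> assume \<sigma>: "\<sigma> \<in> {min a b..max a b}" and close: "norm (x \<sigma> - y \<sigma>) \<le> 1"
      have x\<sigma>: "norm (x \<sigma>) \<le> R" "\<bar>p \<sigma> - q \<sigma>\<bar> \<le> d" using near \<sigma> by auto
      then have "norm (y \<sigma>) \<le> R + 1"
        using close norm_triangle_ineq2[of "y \<sigma>" "x \<sigma>"] norm_minus_commute[of "y \<sigma>" "x \<sigma>"]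
        by linarith
      moreover have "p \<sigma> \<in> {lm..lp}" "q \<sigma> \<in> {lm..lp}" using pq by blast+
      ultimately have "norm (f (x \<sigma>) (p \<sigma>) - f (y \<sigma>) (q \<sigma>)) \<le> B * (norm (x \<sigma> - y \<sigma>) + \<bar>p \<sigma> - q \<sigma>\<bar>)"
        using x\<sigma> by (intro lip) auto
      also have "\<dots> \<le> B * norm (x \<sigma> - y \<sigma>) + B * d"
        using x\<sigma> B by (simp add: algebra_simps)
      finally show "norm (f (x \<sigma>) (p \<sigma>) - f (y \<sigma>) (q \<sigma>)) \<le> B * norm (x \<sigma> - y \<sigma>) + B * d" .
    qed
  qed
  then show ?thesis by (rule that)
qed

lemma ode_solution_unique:
  fixes f :: "'a::euclidean_space \<Rightarrow> real \<Rightarrow> 'a"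
  assumes "C1_fun2 f" "ode_solution f p x" "ode_solution f p y" "range p \<subseteq> {lm..lp}"
    and "x a = y a"
  shows "x t = y t"
proof -
  obtain R where R: "\<And>\<sigma>. \<sigma> \<in> {min a t..max a t} \<Longrightarrow> norm (x \<sigma>) \<le> R"
    using continuous_bounded_on_interval[OF ode_solution_continuous[OF assms(2)]] by blast
  obtain B where cmp: "comparison_constant f lm lp R B"
    using comparison_constant_exists[OF assms(1), of lm lp R] by blast
  have "norm (x t - y t)^2 \<le> exp ((2*B+1)*\<bar>t-a\<bar>) * (norm (x a - y a)^2 + (B*0)^2)"
    by (rule comparison_constantD[OF cmp assms(2,3,4,4)]) (use R assms(5) in auto)
  then show ?thesis using assms(5) by simp
qed

lemma ode_solution_uniform_dependence:
  fixes f :: "'a::euclidean_space \<Rightarrow> real \<Rightarrow> 'a"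
  assumes "C1_fun2 f" and sol: "\<And>y. ode_solution f p (G y)" and init: "\<And>y. G y s = y"
    and "range p \<subseteq> {lm..lp}" and "\<epsilon> > 0"
  shows "\<exists>\<delta>>0. \<forall>y. dist y y0 < \<delta> \<longrightarrow> (\<forall>\<tau>\<in>{min s b..max s b}. dist (G y \<tau>) (G y0 \<tau>) < \<epsilon>)"
proof -
  obtain R where R: "\<And>\<sigma>. \<sigma> \<in> {min s b..max s b} \<Longrightarrow> norm (G y0 \<sigma>) \<le> R"
    using continuous_bounded_on_interval[OF ode_solution_continuous[OF sol]] by blast
  obtain B where cmp: "comparison_constant f lm lp R B"
    using comparison_constant_exists[OF assms(1), of lm lp R] by blast
  have "B > 0" using cmp by (rule comparison_constant_pos)
  define c where "c = exp ((2*B+1)*\<bar>b-s\<bar>)"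
  obtain \<delta> where "\<delta> > 0" and \<delta>: "c * \<delta>^2 < min 1 (\<epsilon>^2)"
    using small_square_below[of c \<epsilon>] \<open>\<epsilon> > 0\<close> by (auto simp: c_def)
  have "dist (G y \<tau>) (G y0 \<tau>) < \<epsilon>" if y: "dist y y0 < \<delta>" and \<tau>: "\<tau> \<in> {min s b..max s b}" for y \<tau>
  proof -
    have "c * norm (G y0 s - G y s)^2 \<le> c * \<delta>^2"
      using y init \<open>\<delta> > 0\<close> by (auto simp: c_def dist_norm norm_minus_commute intro!: power_mono)
    then have small: "c * norm (G y0 s - G y s)^2 < min 1 (\<epsilon>^2)" using \<delta> by linarith
    have "norm (G y0 \<tau> - G y \<tau>)^2 \<le> exp ((2*B+1)*\<bar>\<tau>-s\<bar>) * (norm (G y0 s - G y s)^2 + (B*0)^2)"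
      by (rule comparison_constantD[OF cmp sol sol assms(4,4)])
        (use R small \<tau> in \<open>auto simp: c_def\<close>)
    also have "\<dots> \<le> c * norm (G y0 s - G y s)^2"
      using \<tau> \<open>B > 0\<close> by (auto simp: c_def intro!: mult_right_mono)
    finally have "norm (G y0 \<tau> - G y \<tau>)^2 < \<epsilon>^2" using small by linarith
    then show ?thesis
      using \<open>\<epsilon> > 0\<close> by (simp add: dist_norm norm_minus_commute power_less_imp_less_base)
  qed
  then show ?thesis using \<open>\<delta> > 0\<close> by blast
qed

lemma ode_solution_continuous_initial_value:
  fixes f :: "'a::euclidean_space \<Rightarrow> real \<Rightarrow> 'a"
  assumes "C1_fun2 f" "\<And>y. ode_solution f p (G y)" "\<And>y. G y s = y" "range p \<subseteq> {lm..lp}"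
  shows "continuous_on UNIV (\<lambda>y. G y t)"
  unfolding continuous_on_iff
proof (intro ballI allI impI)
  fix y0 :: 'a and \<epsilon> :: real assume "\<epsilon> > 0"
  from ode_solution_uniform_dependence[OF assms this, of y0 t]
  show "\<exists>\<delta>>0. \<forall>y\<in>UNIV. dist y y0 < \<delta> \<longrightarrow> dist (G y t) (G y0 t) < \<epsilon>" by auto
qed

section \<open>Pullback omega-limit sets of a continuous cocycle\<close>

locale continuous_cocycle =
  fixes \<Phi> :: "real \<Rightarrow> real \<Rightarrow> 'a::heine_borel \<Rightarrow> 'a"
  assumes cocycle_same [simp]: "\<Phi> s s x = x"
    and cocycle_comp [simp]: "\<Phi> t u (\<Phi> u s x) = \<Phi> t s x"
    and continuous_on_cocycle: "continuous_on UNIV (\<Phi> t s)"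
begin

lemma absorbed_iterate:
  assumes step: "\<And>s y. s \<le> S \<Longrightarrow> y \<in> K \<Longrightarrow> \<Phi> (s+T) s y \<in> K"
    and "T > 0" "y \<in> K" "s + real n * T \<le> S + T"
  shows "\<Phi> (s + real n * T) s y \<in> K"
  using assms(4)
proof (induction n)
  case 0
  then show ?case using \<open>y \<in> K\<close> by simp
next
  case (Suc n)
  then have "s + real n * T \<le> S" by (simp add: algebra_simps)
  with Suc.IH \<open>T > 0\<close> have "\<Phi> (s + real n * T + T) (s + real n * T) (\<Phi> (s + real n * T) s y) \<in> K"
    by (intro step) auto
  then show ?case by (simp add: algebra_simps)
qed

lemma absorbed_restart:
  assumes step: "\<And>s y. s \<le> S \<Longrightarrow> y \<in> K \<Longrightarrow> \<Phi> (s+T) s y \<in> K"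
    and "T > 0" "0 \<le> c" "s \<le> u - c" "u - c \<le> S" "y \<in> K"
  obtains z \<tau> where "z \<in> K" "c \<le> \<tau>" "\<tau> \<le> c + T" "\<Phi> u s y = \<Phi> u (u - \<tau>) z"
proof -
  define q where "q = (u - c - s) / T"
  define n where "n = nat \<lfloor>q\<rfloor>"
  have "q \<ge> 0" using assms(2,4) by (simp add: q_def)
  then have "real n \<le> q" "q < real n + 1" unfolding n_def by linarith+
  then have n: "real n * T \<le> u - c - s" "u - c - s < real n * T + T"
    using \<open>T > 0\<close> by (simp_all add: q_def field_simps)
  have "\<Phi> (s + real n * T) s y \<in> K"
    using absorbed_iterate[OF step \<open>T > 0\<close> \<open>y \<in> K\<close>] n assms(5) \<open>T > 0\<close> by simp
  moreover have "c \<le> u - (s + real n * T)" "u - (s + real n * T) \<le> c + T" using n by auto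
  moreover have "\<Phi> u s y = \<Phi> u (u - (u - (s + real n * T))) (\<Phi> (s + real n * T) s y)" by simp
  ultimately show ?thesis by (rule that)
qed

definition pullback_closure :: "'a set \<Rightarrow> real \<Rightarrow> real \<Rightarrow> 'a set" where
  "pullback_closure K t s = closure (\<Union>s'\<in>{..s}. \<Phi> t s' ` K)"

definition pullback_omega :: "'a set \<Rightarrow> real \<Rightarrow> 'a set" where
  "pullback_omega K t = (\<Inter>s\<in>{..t}. pullback_closure K t s)"

definition pullback_omega_family :: "'a set \<Rightarrow> real \<Rightarrow> real \<Rightarrow> 'a set" where
  "pullback_omega_family K t0 t = \<Phi> t t0 ` pullback_omega K t0"

lemma pullback_closure_mono: "s1 \<le> s2 \<Longrightarrow> pullback_closure K t s1 \<subseteq> pullback_closure K t s2"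
  unfolding pullback_closure_def by (intro closure_mono) (auto intro: order_trans)

lemma pullback_closure_nest:
  "i \<le> j \<Longrightarrow> pullback_closure K t (min t (- j)) \<subseteq> pullback_closure K t (min t (- i))"
  by (intro pullback_closure_mono) auto

lemma image_subset_pullback_closure: "\<Phi> t s ` K \<subseteq> pullback_closure K t s"
  unfolding pullback_closure_def using closure_subset by fastforce

lemma pullback_omega_subset: "s \<le> t \<Longrightarrow> pullback_omega K t \<subseteq> pullback_closure K t s"
  unfolding pullback_omega_def by blast

lemma pullback_omega_eq_Inter_range:
  "pullback_omega K t = \<Inter>(range (\<lambda>\<sigma>. pullback_closure K t (min t (- \<sigma>))))"
proof
  show "pullback_omega K t \<subseteq> \<Inter>(range (\<lambda>\<sigma>. pullback_closure K t (min t (- \<sigma>))))"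
    by (intro INF_greatest pullback_omega_subset) simp
  show "\<Inter>(range (\<lambda>\<sigma>. pullback_closure K t (min t (- \<sigma>)))) \<subseteq> pullback_omega K t"
    unfolding pullback_omega_def
  proof (rule INT_greatest)
    fix s assume "s \<in> {..t}"
    then show "\<Inter>(range (\<lambda>\<sigma>. pullback_closure K t (min t (- \<sigma>)))) \<subseteq> pullback_closure K t s"
      using INF_lower[of "- s" UNIV "\<lambda>\<sigma>. pullback_closure K t (min t (- \<sigma>))"] by simp
  qed
qed

context
  fixes K :: "'a set" and t0 :: real
  assumes K_nonempty: "K \<noteq> {}" and absorbed_bounded: "bounded (\<Union>s\<in>{..t0}. \<Phi> t0 s ` K)"
begin

lemma compact_pullback_closure:
  assumes "s \<le> t0"
  shows "compact (pullback_closure K t0 s)"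
proof -
  have "(\<Union>s'\<in>{..s}. \<Phi> t0 s' ` K) \<subseteq> (\<Union>s\<in>{..t0}. \<Phi> t0 s ` K)"
    using assms by (intro UN_mono) auto
  then show ?thesis
    unfolding pullback_closure_def compact_closure by (rule bounded_subset[OF absorbed_bounded])
qed

lemma pullback_closure_nonempty: "pullback_closure K t0 s \<noteq> {}"
  using image_subset_pullback_closure[where K=K and t=t0 and s=s] K_nonempty by auto

lemma compact_pullback_omega: "compact (pullback_omega K t0)"
  and pullback_omega_nonempty: "pullback_omega K t0 \<noteq> {}"
proof -
  let ?F = "\<lambda>\<sigma>. pullback_closure K t0 (min t0 (- \<sigma>))"
  have F: "compact (?F \<sigma>)" "?F \<sigma> \<noteq> {}" for \<sigma>
    using compact_pullback_closure pullback_closure_nonempty by auto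
  have "\<Inter>(range ?F) \<noteq> {}"
    by (rule compact_nest[OF F pullback_closure_nest])
  then show "pullback_omega K t0 \<noteq> {}" by (simp add: pullback_omega_eq_Inter_range)
  have "closed (pullback_omega K t0)"
    unfolding pullback_omega_def pullback_closure_def by (intro closed_INT) auto
  with compact_pullback_closure[of t0]
  have "compact (pullback_closure K t0 t0 \<inter> pullback_omega K t0)"
    by (intro compact_Int_closed) auto
  then show "compact (pullback_omega K t0)"
    using pullback_omega_subset[of t0] by (simp add: Int_absorb1)
qed

lemma pullback_closure_near_omega:
  assumes "\<epsilon> > 0"
  obtains S where "S \<le> t0" "\<And>s x. s \<le> S \<Longrightarrow> x \<in> pullback_closure K t0 s \<Longrightarrow>
    infdist x (pullback_omega K t0) < \<epsilon>"
proof -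
  let ?F = "\<lambda>\<sigma>. pullback_closure K t0 (min t0 (- \<sigma>))"
  obtain \<sigma> where \<sigma>: "\<And>x. x \<in> ?F \<sigma> \<Longrightarrow> infdist x (\<Inter>(range ?F)) < \<epsilon>"
    by (rule compact_nest_near_Inter[of ?F, OF _ _ _ assms])
      (use compact_pullback_closure pullback_closure_nonempty pullback_closure_nest in auto)
  show ?thesis
  proof (rule that[of "min t0 (- \<sigma>)"])
    fix s x assume "s \<le> min t0 (- \<sigma>)" "x \<in> pullback_closure K t0 s"
    then show "infdist x (pullback_omega K t0) < \<epsilon>"
      using \<sigma> pullback_closure_mono[of s "min t0 (- \<sigma>)"] pullback_omega_eq_Inter_range by auto
  qed simp
qed

lemma pullback_omega_family_compact:
  "compact (pullback_omega_family K t0 t)" "pullback_omega_family K t0 t \<noteq> {}"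
  unfolding pullback_omega_family_def
  using compact_pullback_omega pullback_omega_nonempty
  by (auto intro!: compact_continuous_image continuous_on_subset[OF continuous_on_cocycle])

text \<open>The states at time t0 all lie in the compact set pullback_closure K t0 t0, on which
  \<Phi> t t0 is uniformly continuous.\<close>
lemma pullback_orbits_near_omega_family:
  assumes "\<epsilon> > 0"
  obtains S where "\<And>s x. s \<le> S \<Longrightarrow> x \<in> K \<Longrightarrow> infdist (\<Phi> t s x) (pullback_omega_family K t0 t) \<le> \<epsilon>"
proof -
  let ?D = "pullback_closure K t0 t0" and ?\<omega> = "pullback_omega K t0"
  have "uniformly_continuous_on ?D (\<Phi> t t0)"
    by (intro compact_uniformly_continuous continuous_on_subset[OF continuous_on_cocycle]
        compact_pullback_closure) auto
  then obtain \<delta> where "\<delta> > 0"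
    and \<delta>: "\<And>x x'. x \<in> ?D \<Longrightarrow> x' \<in> ?D \<Longrightarrow> dist x' x < \<delta> \<Longrightarrow> dist (\<Phi> t t0 x') (\<Phi> t t0 x) < \<epsilon>"
    unfolding uniformly_continuous_on_def using \<open>\<epsilon> > 0\<close> by metis
  obtain S where "S \<le> t0"
    and S: "\<And>s x. s \<le> S \<Longrightarrow> x \<in> pullback_closure K t0 s \<Longrightarrow> infdist x ?\<omega> < \<delta>"
    using pullback_closure_near_omega[OF \<open>\<delta> > 0\<close>] by blast
  have "infdist (\<Phi> t s x) (pullback_omega_family K t0 t) \<le> \<epsilon>" if "s \<le> S" "x \<in> K" for s x
  proof -
    let ?z = "\<Phi> t0 s x"
    have "?z \<in> pullback_closure K t0 s" using image_subset_pullback_closure that by blast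
    then have "?z \<in> ?D" "infdist ?z ?\<omega> < \<delta>"
      using S that pullback_closure_mono[of s t0 K t0] \<open>S \<le> t0\<close> by auto
    moreover obtain a where "a \<in> ?\<omega>" "infdist ?z ?\<omega> = dist ?z a"
      using infdist_attains_inf[OF compact_imp_closed]
        compact_pullback_omega pullback_omega_nonempty
      by blast
    moreover have "a \<in> ?D" using \<open>a \<in> ?\<omega>\<close> pullback_omega_subset by blast
    ultimately have "dist (\<Phi> t s x) (\<Phi> t t0 a) < \<epsilon>" using \<delta>[of a ?z] by simp
    moreover have "\<Phi> t t0 a \<in> pullback_omega_family K t0 t"
      using \<open>a \<in> ?\<omega>\<close> by (simp add: pullback_omega_family_def)
    ultimately show ?thesis using infdist_le[of "\<Phi> t t0 a" _ "\<Phi> t s x"] by fastforce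
  qed
  then show ?thesis by (rule that)
qed

lemma pullback_omega_family_attracts:
  assumes "U \<subseteq> K" "U \<noteq> {}"
  shows "((\<lambda>s. setdist_d (\<Phi> t s ` U) (pullback_omega_family K t0 t)) \<longlongrightarrow> 0) at_bot"
  unfolding tendsto_iff eventually_at_bot_linorder
proof (intro allI impI)
  fix \<epsilon> :: real assume "\<epsilon> > 0"
  then obtain S where S: "\<And>s x. s \<le> S \<Longrightarrow> x \<in> K \<Longrightarrow>
      infdist (\<Phi> t s x) (pullback_omega_family K t0 t) \<le> \<epsilon>/2"
    using pullback_orbits_near_omega_family[of "\<epsilon>/2" t] by auto
  have "\<bar>setdist_d (\<Phi> t s ` U) (pullback_omega_family K t0 t)\<bar> \<le> \<epsilon>/2" if "s \<le> S" for s
    using S[OF that] assms by (intro abs_setdist_d_le) auto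
  then show "\<exists>S. \<forall>s\<le>S. dist (setdist_d (\<Phi> t s ` U) (pullback_omega_family K t0 t)) 0 < \<epsilon>"
    using \<open>\<epsilon> > 0\<close> by (intro exI[of _ S] allI impI) (force simp: dist_real_def)
qed

end

lemma pullback_omega_family_invariant:
  "\<Phi> t s ` pullback_omega_family K t0 s = pullback_omega_family K t0 t"
  unfolding pullback_omega_family_def by (simp add: image_image)

lemma local_pullback_attractor_pullback_omega_family:
  assumes bounded: "bounded (\<Union>s\<in>{..t0}. \<Phi> t0 s ` K)"
    and "open U" "bounded U" "U \<subseteq> K" "U \<noteq> {}"
    and "upper_backward_limit (pullback_omega_family K t0) \<subseteq> U"
  shows "local_pullback_attractor \<Phi> (pullback_omega_family K t0)"
  unfolding local_pullback_attractor_def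
proof (intro conjI allI exI[of _ U])
  have "K \<noteq> {}" using assms(4,5) by blast
  show "pullback_omega_family K t0 t \<noteq> {}" "compact (pullback_omega_family K t0 t)" for t
    using pullback_omega_family_compact[OF \<open>K \<noteq> {}\<close> bounded] by auto
  show "((\<lambda>s. setdist_d (\<Phi> t s ` U) (pullback_omega_family K t0 t)) \<longlongrightarrow> 0) at_bot" for t
    by (rule pullback_omega_family_attracts[OF \<open>K \<noteq> {}\<close> bounded assms(4,5)])
qed (use assms pullback_omega_family_invariant in auto)

lemma upper_backward_limit_pullback_omega_family_subset:
  assumes "closed M" "M \<noteq> {}"
    and near: "\<And>\<epsilon>. \<epsilon> > 0 \<Longrightarrow> \<exists>S L. \<forall>t\<le>S. \<forall>s\<le>t-L. \<forall>y\<in>K. infdist (\<Phi> t s y) M \<le> \<epsilon>"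
  shows "upper_backward_limit (pullback_omega_family K t0) \<subseteq> M"
proof
  fix x assume x: "x \<in> upper_backward_limit (pullback_omega_family K t0)"
  have "infdist x M \<le> \<epsilon>" if "\<epsilon> > 0" for \<epsilon>
  proof -
    let ?N = "{x. infdist x M \<le> \<epsilon>}"
    have "closed ?N" by (intro closed_Collect_le continuous_intros)
    obtain S L where SL: "\<And>t s y. t \<le> S \<Longrightarrow> s \<le> t - L \<Longrightarrow> y \<in> K \<Longrightarrow> infdist (\<Phi> t s y) M \<le> \<epsilon>"
      using near[OF \<open>\<epsilon> > 0\<close>] by blast
    define \<tau> where "\<tau> = max 1 (- min S (t0 + L))"
    have "pullback_omega_family K t0 t \<subseteq> ?N" if "t \<le> -\<tau>" for t
    proof -
      have "\<Phi> t t0 ` (\<Union>s\<in>{..t-L}. \<Phi> t0 s ` K) \<subseteq> ?N"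
        using SL that by (auto simp: \<tau>_def)
      then have "\<Phi> t t0 ` pullback_closure K t0 (t-L) \<subseteq> ?N"
        unfolding pullback_closure_def
        by (rule image_closure_subset[OF continuous_on_subset[OF continuous_on_cocycle subset_UNIV]
              \<open>closed ?N\<close>])
      moreover have "pullback_omega K t0 \<subseteq> pullback_closure K t0 (t-L)"
        using that by (intro pullback_omega_subset) (simp add: \<tau>_def)
      ultimately show ?thesis unfolding pullback_omega_family_def by blast
    qed
    moreover have "\<tau> > 0" by (simp add: \<tau>_def)
    ultimately have "closure (\<Union>t\<in>{..-\<tau>}. pullback_omega_family K t0 t) \<subseteq> ?N"
      using \<open>closed ?N\<close> by (intro closure_minimal) auto
    then show ?thesis using x \<open>\<tau> > 0\<close> unfolding upper_backward_limit_def by blast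
  qed
  then have "infdist x M \<le> 0" using field_le_epsilon[of "infdist x M" 0] by simp
  then have "infdist x M = 0" using infdist_nonneg[of x M] by linarith
  then show "x \<in> M" using in_closed_iff_infdist_zero[OF assms(1,2)] by simp
qed

end

locale parameter_shift_system =
  fixes f :: "'a::euclidean_space \<Rightarrow> real \<Rightarrow> 'a"
    and \<Lambda> :: "real \<Rightarrow> real"
    and lm lp r :: real
    and \<Phi> :: "real \<Rightarrow> real \<Rightarrow> 'a \<Rightarrow> 'a"
    and \<phi>m :: "real \<Rightarrow> 'a \<Rightarrow> 'a"
    and Am :: "'a set"
  assumes C1: "C1_fun2 f"
    and lm_less_lp: "lm < lp"
    and shift: "parameter_shift \<Lambda> lm lp"
    and r_pos: "r > 0"
    and cocycle: "is_solution_cocycle f \<Lambda> r \<Phi>"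
    and flow: "is_autonomous_flow f lm \<phi>m"
    and stable: "asymptotically_stable \<phi>m Am"
begin

lemma range_parameter: "range (\<lambda>\<sigma>. \<Lambda> (r * \<sigma>)) \<subseteq> {lm..lp}"
  using shift unfolding parameter_shift_def by (auto simp: less_imp_le)

lemma range_past_parameter: "range (\<lambda>_. lm) \<subseteq> {lm..lp}"
  using lm_less_lp by auto

lemma ode_solution_cocycle: "ode_solution f (\<lambda>\<sigma>. \<Lambda> (r * \<sigma>)) (\<lambda>\<tau>. \<Phi> \<tau> s x)"
  using cocycle unfolding is_solution_cocycle_def ode_solution_def by blast

lemma ode_solution_flow: "ode_solution f (\<lambda>_. lm) (\<lambda>\<tau>. \<phi>m \<tau> y)"
  using flow unfolding is_autonomous_flow_def ode_solution_def by blast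

lemma flow_zero [simp]: "\<phi>m 0 y = y"
  using flow unfolding is_autonomous_flow_def by blast

sublocale continuous_cocycle \<Phi>
proof
  show same: "\<Phi> s s x = x" for s x
    using cocycle unfolding is_solution_cocycle_def by blast
  show "\<Phi> t u (\<Phi> u s x) = \<Phi> t s x" for t u s x
    by (rule ode_solution_unique[OF C1 ode_solution_cocycle ode_solution_cocycle range_parameter,
          where a=u]) (simp add: same)
  show "continuous_on UNIV (\<Phi> t s)" for t s
    using ode_solution_continuous_initial_value[OF C1 ode_solution_cocycle same range_parameter] .
qed

lemma flow_add: "\<phi>m (t + s) y = \<phi>m t (\<phi>m s y)"
proof -
  have "(\<lambda>\<tau>. \<phi>m (\<tau> + s) y) t = (\<lambda>\<tau>. \<phi>m \<tau> (\<phi>m s y)) t"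
    by (rule ode_solution_unique[OF C1 _ ode_solution_flow range_past_parameter, where a=0])
      (use ode_solution_shift[OF ode_solution_flow[of y], where h=s] in auto)
  then show ?thesis by simp
qed

lemma continuous_on_flow: "continuous_on UNIV (\<phi>m t)"
  by (rule ode_solution_continuous_initial_value[OF C1 ode_solution_flow flow_zero
        range_past_parameter])

lemma attractor_nonempty: "Am \<noteq> {}" and compact_attractor: "compact Am"
  using stable unfolding asymptotically_stable_def by auto

lemma attractor_stable:
  "\<epsilon> > 0 \<Longrightarrow> \<exists>\<delta>>0. \<forall>t>0. \<forall>y. infdist y Am < \<delta> \<longrightarrow> infdist (\<phi>m t y) Am < \<epsilon>"
  using stable unfolding asymptotically_stable_def nbhd_def by auto

lemma attracted_neighbourhood:
  obtains \<rho> where "\<rho> > 0" "\<And>y. infdist y Am \<le> \<rho> \<Longrightarrow> ((\<lambda>t. infdist (\<phi>m t y) Am) \<longlongrightarrow> 0) at_top"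
proof -
  obtain \<eta> where "\<eta> > 0"
    and "\<forall>y. infdist y Am < \<eta> \<longrightarrow> ((\<lambda>t. infdist (\<phi>m t y) Am) \<longlongrightarrow> 0) at_top"
    using stable unfolding asymptotically_stable_def nbhd_def by auto
  then show ?thesis using that[of "\<eta>/2"] by auto
qed

lemma compact_attractor_neighbourhood: "\<rho> > 0 \<Longrightarrow> compact {y. infdist y Am \<le> \<rho>}"
  by (rule compact_infdist_le[OF attractor_nonempty compact_attractor])

text \<open>A point reaching the stability neighbourhood of Am drags a neighbourhood along by
  continuity, and stability keeps it there; compactness makes the entrance time uniform.\<close>
lemma uniform_attraction:
  assumes "\<rho> > 0" and att: "\<And>y. infdist y Am \<le> \<rho> \<Longrightarrow> ((\<lambda>t. infdist (\<phi>m t y) Am) \<longlongrightarrow> 0) at_top"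
    and "\<epsilon> > 0"
  obtains L where "\<And>y \<tau>. infdist y Am \<le> \<rho> \<Longrightarrow> L \<le> \<tau> \<Longrightarrow> infdist (\<phi>m \<tau> y) Am < \<epsilon>"
proof -
  obtain \<delta> where "\<delta> > 0" and \<delta>: "\<And>t y. t > 0 \<Longrightarrow> infdist y Am < \<delta> \<Longrightarrow> infdist (\<phi>m t y) Am < \<epsilon>"
    using attractor_stable[OF \<open>\<epsilon> > 0\<close>] by blast
  define \<delta>' where "\<delta>' = min \<delta> \<epsilon>"
  have "\<delta>' > 0" using \<open>\<delta> > 0\<close> \<open>\<epsilon> > 0\<close> by (simp add: \<delta>'_def)
  have "\<exists>L. \<forall>y\<in>{y. infdist y Am \<le> \<rho>}. \<forall>\<tau>\<ge>L. infdist (\<phi>m \<tau> y) Am < \<epsilon>"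
  proof (rule compact_local_bound_uniform)
    show "compact {y. infdist y Am \<le> \<rho>}" by (rule compact_attractor_neighbourhood) fact
  next
    fix y0 assume "y0 \<in> {y. infdist y Am \<le> \<rho>}"
    then have "((\<lambda>t. infdist (\<phi>m t y0) Am) \<longlongrightarrow> 0) at_top" using att by simp
    then have "eventually (\<lambda>t. infdist (\<phi>m t y0) Am < \<delta>'/2) at_top"
      by (rule order_tendstoD(2)) (use \<open>\<delta>' > 0\<close> in simp)
    then obtain t0 where t0: "infdist (\<phi>m t0 y0) Am < \<delta>'/2"
      unfolding eventually_at_top_linorder by blast
    obtain \<eta> where "\<eta> > 0" and \<eta>: "\<And>y. dist y y0 < \<eta> \<Longrightarrow> dist (\<phi>m t0 y) (\<phi>m t0 y0) < \<delta>'/2"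
      using continuous_on_flow[of t0] \<open>\<delta>' > 0\<close> unfolding continuous_on_iff
      by (metis UNIV_I half_gt_zero)
    have "infdist (\<phi>m \<tau> y) Am < \<epsilon>" if "dist y y0 < \<eta>" "t0 \<le> \<tau>" for y \<tau>
    proof -
      have "infdist (\<phi>m t0 y) Am < \<delta>'"
        using infdist_triangle[of "\<phi>m t0 y" Am "\<phi>m t0 y0"] t0 \<eta>[OF that(1)] by linarith
      moreover have "\<phi>m \<tau> y = \<phi>m (\<tau> - t0) (\<phi>m t0 y)" using flow_add[of "\<tau> - t0" t0] by simp
      ultimately show ?thesis
        using \<delta>[of "\<tau> - t0"] \<open>t0 \<le> \<tau>\<close> by (cases "\<tau> = t0") (auto simp: \<delta>'_def)
    qed
    then show "\<exists>\<eta>>0. \<exists>L. \<forall>y. dist y y0 < \<eta> \<longrightarrow> (\<forall>\<tau>\<ge>L. infdist (\<phi>m \<tau> y) Am < \<epsilon>)"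
      using \<open>\<eta> > 0\<close> by blast
  qed auto
  then show ?thesis using that by auto
qed

lemma flow_bounded_on_compact:
  assumes "compact K"
  obtains R where "\<And>y \<tau>. y \<in> K \<Longrightarrow> \<tau> \<in> {0..W} \<Longrightarrow> norm (\<phi>m \<tau> y) \<le> R"
proof -
  have "\<exists>R. \<forall>y\<in>K. \<forall>\<tau>\<in>{0..W}. norm (\<phi>m \<tau> y) \<le> R"
  proof (rule compact_local_bound_uniform[OF assms])
    fix y0
    obtain R0 where R0: "\<And>\<tau>. \<tau> \<in> {0..W} \<Longrightarrow> norm (\<phi>m \<tau> y0) \<le> R0"
      using continuous_bounded_on_interval[OF ode_solution_continuous[OF ode_solution_flow]]
      by blast
    obtain \<eta> where "\<eta> > 0"
      and \<eta>: "\<And>y \<tau>. dist y y0 < \<eta> \<Longrightarrow> \<tau> \<in> {min 0 W..max 0 W} \<Longrightarrow> dist (\<phi>m \<tau> y) (\<phi>m \<tau> y0) < 1"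
      using ode_solution_uniform_dependence[OF C1 ode_solution_flow flow_zero range_past_parameter,
          of 1 y0 W] by auto
    have "norm (\<phi>m \<tau> y) \<le> R0 + 1" if "dist y y0 < \<eta>" "\<tau> \<in> {0..W}" for y \<tau>
      using \<eta>[OF that(1)] R0[OF that(2)] that(2) norm_triangle_ineq2[of "\<phi>m \<tau> y" "\<phi>m \<tau> y0"]
      by (force simp: dist_norm)
    then show "\<exists>\<eta>>0. \<exists>R. \<forall>y. dist y y0 < \<eta> \<longrightarrow> (\<forall>\<tau>\<in>{0..W}. norm (\<phi>m \<tau> y) \<le> R)"
      using \<open>\<eta> > 0\<close> by blast
  qed force
  then show ?thesis using that by blast
qed

lemma cocycle_shadows_past_flow:
  assumes "compact K" "W \<ge> 0" "\<epsilon> > 0"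
  obtains T1 where "\<And>s y \<tau>. s \<le> T1 \<Longrightarrow> y \<in> K \<Longrightarrow> \<tau> \<in> {0..W} \<Longrightarrow>
    dist (\<Phi> (s+\<tau>) s y) (\<phi>m \<tau> y) < \<epsilon>"
proof -
  obtain R where R: "\<And>y \<tau>. y \<in> K \<Longrightarrow> \<tau> \<in> {0..W} \<Longrightarrow> norm (\<phi>m \<tau> y) \<le> R"
    using flow_bounded_on_compact[OF assms(1)] by blast
  obtain B where cmp: "comparison_constant f lm lp R B"
    using comparison_constant_exists[OF C1, of lm lp R] by blast
  have "B > 0" using cmp by (rule comparison_constant_pos)
  define c where "c = exp ((2*B+1)*W)"
  obtain \<delta> where "\<delta> > 0" and \<delta>: "c * \<delta>^2 < min 1 (\<epsilon>^2)"
    using small_square_below[of c \<epsilon>] \<open>\<epsilon> > 0\<close> by (auto simp: c_def)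
  have "(\<Lambda> \<longlongrightarrow> lm) at_bot" using shift unfolding parameter_shift_def by blast
  then obtain N where N: "\<And>x. x \<le> N \<Longrightarrow> \<bar>\<Lambda> x - lm\<bar> < \<delta> / B"
    using \<open>\<delta> > 0\<close> \<open>B > 0\<close> unfolding tendsto_iff eventually_at_bot_linorder dist_real_def
    by (metis divide_pos_pos)
  have "dist (\<Phi> (s+\<tau>) s y) (\<phi>m \<tau> y) < \<epsilon>" if "s \<le> N / r - W" "y \<in> K" "\<tau> \<in> {0..W}" for s y \<tau>
  proof -
    let ?x = "\<lambda>\<sigma>. \<phi>m (\<sigma> + - s) y"
    have "norm (?x (s+\<tau>) - \<Phi> (s+\<tau>) s y)^2
        \<le> exp ((2*B+1)*\<bar>s+\<tau>-s\<bar>) * (norm (?x s - \<Phi> s s y)^2 + (B*(\<delta>/B))^2)"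
    proof (rule comparison_constantD[OF cmp _ ode_solution_cocycle
          range_past_parameter range_parameter])
      show "ode_solution f (\<lambda>_. lm) ?x"
        using ode_solution_shift[OF ode_solution_flow, of "- s"] by simp
      fix \<sigma> assume \<sigma>: "\<sigma> \<in> {min s (s+W)..max s (s+W)}"
      then have "\<sigma> \<le> N / r" using that(1) \<open>W \<ge> 0\<close> by auto
      then have "r * \<sigma> \<le> N" using r_pos by (simp add: pos_le_divide_eq mult.commute)
      then show "norm (?x \<sigma>) \<le> R \<and> \<bar>lm - \<Lambda> (r * \<sigma>)\<bar> \<le> \<delta> / B"
        using R[OF that(2), of "\<sigma> - s"] N[of "r * \<sigma>"] \<sigma> \<open>W \<ge> 0\<close> by (simp add: abs_minus_commute)
    qed (use \<delta> \<open>B > 0\<close> \<open>W \<ge> 0\<close> that(3) in \<open>auto simp: c_def\<close>)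
    also have "\<dots> \<le> c * \<delta>^2"
      using that(3) \<open>B > 0\<close> by (auto simp: c_def intro!: mult_right_mono)
    finally have "norm (\<phi>m \<tau> y - \<Phi> (s+\<tau>) s y)^2 < \<epsilon>^2" using \<delta> by simp
    then show ?thesis
      using \<open>\<epsilon> > 0\<close> by (simp add: dist_norm norm_minus_commute power_less_imp_less_base)
  qed
  then show ?thesis using that by blast
qed

lemma absorbing_sublevel:
  assumes "\<rho> > 0" and att: "\<And>y. infdist y Am \<le> \<rho> \<Longrightarrow> ((\<lambda>t. infdist (\<phi>m t y) Am) \<longlongrightarrow> 0) at_top"
  defines "K \<equiv> {y. infdist y Am \<le> \<rho>}"
  obtains T T0 where "T > 0" "\<And>s y. s \<le> T0 \<Longrightarrow> y \<in> K \<Longrightarrow> \<Phi> (s+T) s y \<in> K"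
    "bounded (\<Union>s\<in>{..T0}. \<Phi> T0 s ` K)"
proof -
  have "compact K" unfolding K_def by (rule compact_attractor_neighbourhood) fact
  obtain L where L: "\<And>y \<tau>. y \<in> K \<Longrightarrow> L \<le> \<tau> \<Longrightarrow> infdist (\<phi>m \<tau> y) Am < \<rho>/2"
    using uniform_attraction[OF \<open>\<rho> > 0\<close> att, of "\<rho>/2"] \<open>\<rho> > 0\<close> unfolding K_def by auto
  define T where "T = max L 1"
  have "T > 0" by (simp add: T_def)
  obtain T0 where T0: "\<And>s y \<tau>. s \<le> T0 \<Longrightarrow> y \<in> K \<Longrightarrow> \<tau> \<in> {0..T} \<Longrightarrow>
      dist (\<Phi> (s+\<tau>) s y) (\<phi>m \<tau> y) < \<rho>/2"
    using cocycle_shadows_past_flow[OF \<open>compact K\<close> less_imp_le[OF \<open>T > 0\<close>] half_gt_zero[OF \<open>\<rho> > 0\<close>]]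
    by blast
  obtain R where R: "\<And>y \<tau>. y \<in> K \<Longrightarrow> \<tau> \<in> {0..T} \<Longrightarrow> norm (\<phi>m \<tau> y) \<le> R"
    using flow_bounded_on_compact[OF \<open>compact K\<close>] by blast
  have step: "\<Phi> (s+T) s y \<in> K" if "s \<le> T0" "y \<in> K" for s y
    using infdist_triangle[of "\<Phi> (s+T) s y" Am "\<phi>m T y"] L[OF that(2), of T] T0[OF that, of T]
      \<open>T > 0\<close> by (simp add: K_def T_def)
  have "norm (\<Phi> T0 s y) \<le> R + \<rho>/2" if early: "s \<le> T0" "y \<in> K" for s y
  proof -
    obtain z \<tau> where z: "z \<in> K" "0 \<le> \<tau>" "\<tau> \<le> T" and eq: "\<Phi> T0 s y = \<Phi> T0 (T0 - \<tau>) z"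
      by (rule absorbed_restart[where S=T0 and K=K and T=T and c=0 and u=T0 and s=s and y=y,
          OF step \<open>T > 0\<close>])
        (use early in auto)
    then show ?thesis
      using T0[of "T0 - \<tau>" z \<tau>] R[of z \<tau>] norm_triangle_ineq2[of "\<Phi> T0 s y" "\<phi>m \<tau> z"]
      by (auto simp: dist_norm)
  qed
  then have "bounded (\<Union>s\<in>{..T0}. \<Phi> T0 s ` K)"
    by (intro bounded_subset[OF bounded_cball[of 0 "R + \<rho>/2"]]) auto
  then show ?thesis using that \<open>T > 0\<close> step by blast
qed

lemma absorbed_orbits_approach_attractor:
  assumes "\<rho> > 0" and att: "\<And>y. infdist y Am \<le> \<rho> \<Longrightarrow> ((\<lambda>t. infdist (\<phi>m t y) Am) \<longlongrightarrow> 0) at_top"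
  defines "K \<equiv> {y. infdist y Am \<le> \<rho>}"
  assumes "T > 0" and step: "\<And>s y. s \<le> T0 \<Longrightarrow> y \<in> K \<Longrightarrow> \<Phi> (s+T) s y \<in> K" and "\<epsilon> > 0"
  shows "\<exists>S L. \<forall>t\<le>S. \<forall>s\<le>t-L. \<forall>y\<in>K. infdist (\<Phi> t s y) Am \<le> \<epsilon>"
proof -
  have "compact K" unfolding K_def by (rule compact_attractor_neighbourhood) fact
  obtain L0 where L0: "\<And>y \<tau>. y \<in> K \<Longrightarrow> L0 \<le> \<tau> \<Longrightarrow> infdist (\<phi>m \<tau> y) Am < \<epsilon>/2"
    using uniform_attraction[OF \<open>\<rho> > 0\<close> att, of "\<epsilon>/2"] \<open>\<epsilon> > 0\<close> unfolding K_def by auto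
  define L where "L = max L0 0"
  have "0 \<le> L" "L + T \<ge> 0" using \<open>T > 0\<close> by (simp_all add: L_def)
  obtain T1 where T1: "\<And>s y \<tau>. s \<le> T1 \<Longrightarrow> y \<in> K \<Longrightarrow> \<tau> \<in> {0..L+T} \<Longrightarrow>
      dist (\<Phi> (s+\<tau>) s y) (\<phi>m \<tau> y) < \<epsilon>/2"
    using cocycle_shadows_past_flow[OF \<open>compact K\<close> \<open>L + T \<ge> 0\<close> half_gt_zero[OF \<open>\<epsilon> > 0\<close>]] by blast
  have "infdist (\<Phi> t s y) Am \<le> \<epsilon>" if early: "t \<le> min T0 T1" "s \<le> t - L" "y \<in> K" for t s y
  proof -
    obtain z \<tau> where z: "z \<in> K" "L \<le> \<tau>" "\<tau> \<le> L + T" and eq: "\<Phi> t s y = \<Phi> t (t - \<tau>) z"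
      by (rule absorbed_restart[where S=T0 and K=K and T=T and c=L and u=t and s=s and y=y,
          OF step \<open>T > 0\<close>])
        (use early \<open>0 \<le> L\<close> in auto)
    then have "dist (\<Phi> t s y) (\<phi>m \<tau> z) < \<epsilon>/2"
      using T1[of "t - \<tau>" z \<tau>] early by (auto simp: L_def)
    then show ?thesis
      using infdist_triangle[of "\<Phi> t s y" Am "\<phi>m \<tau> z"] L0[of z \<tau>] z by (auto simp: L_def)
  qed
  then show ?thesis by blast
qed

end

theorem theorem2p2:
  fixes f :: "'a::euclidean_space \<Rightarrow> real \<Rightarrow> 'a"
    and \<Lambda> :: "real \<Rightarrow> real"
    and lm lp r :: real
    and \<Phi> :: "real \<Rightarrow> real \<Rightarrow> 'a \<Rightarrow> 'a"
    and \<phi>m :: "real \<Rightarrow> 'a \<Rightarrow> 'a"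
    and Am :: "'a set"
  assumes "C1_fun2 f"
    and "lm < lp"
    and "parameter_shift \<Lambda> lm lp"
    and "r > 0"
    and "is_solution_cocycle f \<Lambda> r \<Phi>"
    and "is_autonomous_flow f lm \<phi>m"
    and "asymptotically_stable \<phi>m Am"
  shows "\<exists>A. local_pullback_attractor \<Phi> A \<and> upper_backward_limit A \<subseteq> Am"
proof -
  interpret parameter_shift_system f \<Lambda> lm lp r \<Phi> \<phi>m Am
    by unfold_locales (fact assms)+
  obtain \<rho> where "\<rho> > 0"
    and att: "\<And>y. infdist y Am \<le> \<rho> \<Longrightarrow> ((\<lambda>t. infdist (\<phi>m t y) Am) \<longlongrightarrow> 0) at_top"
    using attracted_neighbourhood by blast
  define K where "K = {y. infdist y Am \<le> \<rho>}"
  define U where "U = {y. infdist y Am < \<rho>}"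
  obtain T T0 where "T > 0" and step: "\<And>s y. s \<le> T0 \<Longrightarrow> y \<in> K \<Longrightarrow> \<Phi> (s+T) s y \<in> K"
    and bounded: "bounded (\<Union>s\<in>{..T0}. \<Phi> T0 s ` K)"
    using absorbing_sublevel[OF \<open>\<rho> > 0\<close> att] unfolding K_def by blast
  have limit: "upper_backward_limit (pullback_omega_family K T0) \<subseteq> Am"
    by (rule upper_backward_limit_pullback_omega_family_subset[OF
          compact_imp_closed[OF compact_attractor] attractor_nonempty])
      (use absorbed_orbits_approach_attractor[OF \<open>\<rho> > 0\<close> att \<open>T > 0\<close> step[unfolded K_def]] in
        \<open>unfold K_def, blast\<close>)
  have "Am \<subseteq> U" "U \<subseteq> K" "open U" using \<open>\<rho> > 0\<close>
    by (auto simp: U_def K_def intro!: open_Collect_less continuous_intros)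
  moreover have "bounded U"
    using compact_attractor_neighbourhood[OF \<open>\<rho> > 0\<close>] \<open>U \<subseteq> K\<close> unfolding K_def
    by (blast intro: bounded_subset compact_imp_bounded)
  moreover have "U \<noteq> {}" using \<open>Am \<subseteq> U\<close> attractor_nonempty by blast
  ultimately have "local_pullback_attractor \<Phi> (pullback_omega_family K T0)"
    using limit by (intro local_pullback_attractor_pullback_omega_family[OF bounded, of U]) auto
  with limit show ?thesis by blast
qed

end
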